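(* For $1\le r\le m\le n$ and $\alpha\in\{1/2,1\}$, the function $\Lambda\mapsto\mathrm{MSE}_n(\Lambda;r,m,\alpha)$ on $[0,\infty)$ is convex and attains its minimum at a unique point.
   Context: Let $W_i(m,n)$ be the distribution of the $i$-th largest eigenvalue of $\frac1nZZ^T$, where $Z$ is a real $m\times n$ matrix with i.i.d. $\mathcal N(0,1)$ entries; $w_i(\Lambda;m,n)=\int_{\Lambda^2}^\infty(\sqrt t-\Lambda)^2\,dW_i(m,n)(t)$; and $\mathrm{MSE}_n(\Lambda;r,m,\alpha)=\frac rm+\frac rn-\frac{r^2}{mn}+\frac{r(n-r)}{mn}\Lambda^2+\alpha\frac{n-r}{mn}\sum_{i=1}^{m-r}w_i(\Lambda;m-r,n-r)$. *)

theory Defs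
  imports "HOL-Probability.Probability" "Jordan_Normal_Form.Char_Poly"
    "HOL-Library.Multiset"
begin

definition gauss_mat :: "nat \<Rightarrow> nat \<Rightarrow> (nat \<times> nat \<Rightarrow> real) measure" where
  "gauss_mat m n = PiM ({..<m} \<times> {..<n}) (\<lambda>_. density lborel std_normal_density)"

definition wishart_of :: "nat \<Rightarrow> nat \<Rightarrow> (nat \<times> nat \<Rightarrow> real) \<Rightarrow> real Matrix.mat" where
  "wishart_of m n Z = Matrix.mat m m (\<lambda>(i,j). (1 / real n) * (\<Sum>k<n. Z (i,k) * Z (j,k)))"

definition eigs_desc :: "real Matrix.mat \<Rightarrow> real list" where
  "eigs_desc A = rev (sorted_list_of_multiset (proots (char_poly A)))"

text \<open>i-th largest eigenvalue (i counted from 1).\<close>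
definition ith_eig :: "nat \<Rightarrow> real Matrix.mat \<Rightarrow> real" where
  "ith_eig i A = eigs_desc A ! (i - 1)"

definition W :: "nat \<Rightarrow> nat \<Rightarrow> nat \<Rightarrow> real measure" where
  "W i m n = distr (gauss_mat m n) borel (\<lambda>Z. ith_eig i (wishart_of m n Z))"

definition w :: "nat \<Rightarrow> real \<Rightarrow> nat \<Rightarrow> nat \<Rightarrow> real" where
  "w i \<Lambda> m n = (LINT t:{\<Lambda>\<^sup>2..}|W i m n. (sqrt t - \<Lambda>)\<^sup>2)"

definition MSE :: "nat \<Rightarrow> real \<Rightarrow> nat \<Rightarrow> nat \<Rightarrow> real \<Rightarrow> real" where
  "MSE n \<Lambda> r m \<alpha> =
     real r / real m + real r / real n - (real r)\<^sup>2 / (real m * real n)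
     + real r * real (n - r) / (real m * real n) * \<Lambda>\<^sup>2
     + \<alpha> * real (n - r) / (real m * real n) * (\<Sum>i=1..m - r. w i \<Lambda> (m - r) (n - r))"

end

theory Submission
  imports Defs
begin

text \<open>Each \<open>w\<^sub>i\<close> is the integral against a finite measure of
  \<open>(\<surd>t - \<Lambda>)\<^sub>+\<^sup>2\<close>, which is convex in \<open>\<Lambda>\<close>, so \<open>w\<^sub>i\<close> is convex on \<open>[0,\<infinity>)\<close>; it is
  also Lipschitz there, since the integrand varies by at most \<open>|\<Lambda> - \<Lambda>'| (1 + t\<^sub>+)\<close>.
  Hence \<open>MSE\<^sub>n\<close> is a convex continuous function plus the term \<open>a\<Lambda>\<^sup>2\<close> with \<open>a > 0\<close>:
  it is strictly convex and grows at least like \<open>a\<Lambda>\<^sup>2\<close>, so it attains its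
  minimum at exactly one point.\<close>

lemma convex_on_finite_sum:
  assumes "finite I" "convex S" "\<And>i. i \<in> I \<Longrightarrow> convex_on S (f i)"
  shows "convex_on S (\<lambda>x. \<Sum>i\<in>I. f i x)"
  using assms by (induction I rule: finite_induct) (auto simp: convex_on_const)

lemma convex_on_cong:
  assumes "S = T" "\<And>x. x \<in> T \<Longrightarrow> f x = g x"
  shows "convex_on S f \<longleftrightarrow> convex_on T g"
  using assms by (auto simp: convex_on_def convex_def)

lemma ex_minimizer_coercive:
  fixes f :: "real \<Rightarrow> real"
  assumes cont: "continuous_on {0..} f" and "a > 0"
    and lower: "\<And>x. x \<ge> 0 \<Longrightarrow> c + a * x\<^sup>2 \<le> f x"
  shows "\<exists>x0\<ge>0. \<forall>x\<ge>0. f x0 \<le> f x"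
proof -
  define R where "R = sqrt (max 0 ((f 0 - c) / a))"
  have "R \<ge> 0" by (simp add: R_def)
  have "(f 0 - c) / a \<le> R\<^sup>2"
    by (simp add: R_def)
  then have "f 0 - c \<le> a * R\<^sup>2"
    using \<open>a > 0\<close> by (simp add: divide_le_eq mult.commute)
  obtain x0 where x0: "x0 \<in> {0..R}" and min_R: "\<And>x. x \<in> {0..R} \<Longrightarrow> f x0 \<le> f x"
    using continuous_attains_inf[of "{0..R}" f] \<open>R \<ge> 0\<close> continuous_on_subset[OF cont]
    by force
  have "f x0 \<le> f x" if "x > R" for x
  proof -
    have "a * R\<^sup>2 \<le> a * x\<^sup>2"
      using that \<open>R \<ge> 0\<close> \<open>a > 0\<close> by (simp add: power_mono)
    then have "f 0 \<le> f x"
      using lower[of x] that \<open>R \<ge> 0\<close> \<open>f 0 - c \<le> a * R\<^sup>2\<close> by simp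
    then show ?thesis
      using min_R[of 0] \<open>R \<ge> 0\<close> by simp
  qed
  then show ?thesis
    using x0 min_R by (metis atLeastAtMost_iff not_le)
qed

lemma minimizer_unique_convex_plus_square:
  fixes g :: "real \<Rightarrow> real" and a :: real
  defines "f \<equiv> \<lambda>x. g x + a * x\<^sup>2"
  assumes "convex_on S g" "a > 0"
    and x: "x \<in> S" "\<And>z. z \<in> S \<Longrightarrow> f x \<le> f z"
    and y: "y \<in> S" "\<And>z. z \<in> S \<Longrightarrow> f y \<le> f z"
  shows "x = y"
proof -
  define z where "z = (1 - 1/2) * x + (1/2) * y"
  have "z \<in> S"
    using convexD_alt[OF convex_on_imp_convex[OF \<open>convex_on S g\<close>] x(1) y(1), of "1/2"]
    by (simp add: z_def)
  have "g z \<le> (g x + g y) / 2"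
    using convex_onD[OF \<open>convex_on S g\<close>, of "1/2" x y] x(1) y(1) by (simp add: z_def)
  moreover have "a * z\<^sup>2 = a * x\<^sup>2 / 2 + a * y\<^sup>2 / 2 - a * (x - y)\<^sup>2 / 4"
    by (simp add: z_def power2_eq_square field_simps)
  ultimately have "f z \<le> (f x + f y) / 2 - a * (x - y)\<^sup>2 / 4"
    unfolding f_def by (simp add: field_simps)
  with x(2)[OF \<open>z \<in> S\<close>] y(2)[OF \<open>z \<in> S\<close>] have "a * (x - y)\<^sup>2 \<le> 0"
    by (simp add: field_simps)
  with \<open>a > 0\<close> show "x = y"
    by (simp add: mult_le_0_iff)
qed

definition excess_sq :: "real \<Rightarrow> real \<Rightarrow> real" where
  "excess_sq t L = (max (sqrt t - L) 0)\<^sup>2"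

lemma excess_sq_nonneg: "excess_sq t L \<ge> 0"
  by (simp add: excess_sq_def)

lemma excess_sq_antimono: "L \<le> L' \<Longrightarrow> excess_sq t L' \<le> excess_sq t L"
  unfolding excess_sq_def by (intro power_mono) auto

lemma borel_measurable_excess_sq: "(\<lambda>t. excess_sq t L) \<in> borel_measurable borel"
  unfolding excess_sq_def by measurable

lemma indicator_scaleR_eq_excess_sq:
  assumes "L \<ge> 0"
  shows "indicator {L\<^sup>2..} t *\<^sub>R (sqrt t - L)\<^sup>2 = excess_sq t L"
proof -
  have "L\<^sup>2 \<le> t \<longleftrightarrow> L \<le> sqrt t"
    using real_sqrt_le_iff[of "L\<^sup>2" t] assms by simp
  then show ?thesis
    by (auto simp: excess_sq_def indicator_def max_def)
qed

lemma convex_on_excess_sq: "convex_on UNIV (excess_sq t)"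
proof (rule convex_onI)
  fix u x y :: real
  assume u: "0 < u" "u < 1"
  define a where "a = max (sqrt t - x) 0"
  define b where "b = max (sqrt t - y) 0"
  have "sqrt t - ((1 - u) * x + u * y) = (1 - u) * (sqrt t - x) + u * (sqrt t - y)"
    by (simp add: algebra_simps)
  also have "\<dots> \<le> (1 - u) * a + u * b"
    using u by (intro add_mono mult_left_mono) (auto simp: a_def b_def)
  finally have "max (sqrt t - ((1 - u) * x + u * y)) 0 \<le> (1 - u) * a + u * b"
    using u by (auto simp: a_def b_def)
  then have "excess_sq t ((1 - u) * x + u * y) \<le> ((1 - u) * a + u * b)\<^sup>2"
    unfolding excess_sq_def by (intro power_mono) auto
  also have "\<dots> \<le> (1 - u) * a\<^sup>2 + u * b\<^sup>2"
    using convex_onD[OF convex_power2, of u a b] u by simp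
  finally show "excess_sq t ((1 - u) *\<^sub>R x + u *\<^sub>R y) \<le> (1 - u) * excess_sq t x + u * excess_sq t y"
    by (simp add: excess_sq_def a_def b_def)
qed simp

lemma excess_sq_lipschitz:
  assumes "a \<ge> 0" "b \<ge> 0"
  shows "\<bar>excess_sq t a - excess_sq t b\<bar> \<le> \<bar>a - b\<bar> * (1 + excess_sq t 0)"
proof -
  define A where "A = max (sqrt t - a) 0"
  define B where "B = max (sqrt t - b) 0"
  define S where "S = max (sqrt t) 0"
  have "A \<ge> 0" "B \<ge> 0" by (auto simp: A_def B_def)
  have "\<bar>A - B\<bar> \<le> \<bar>a - b\<bar>"
    by (auto simp: A_def B_def abs_if max_def)
  moreover have "A + B \<le> 1 + S\<^sup>2"
  proof -
    have "A \<le> S" "B \<le> S"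
      unfolding A_def B_def S_def using assms by (auto intro: max.mono)
    moreover have "2 * S \<le> 1 + S\<^sup>2"
      using sum_squares_ge_zero[of "S - 1" 0] by (simp add: power2_eq_square algebra_simps)
    ultimately show ?thesis by linarith
  qed
  ultimately have "\<bar>A - B\<bar> * (A + B) \<le> \<bar>a - b\<bar> * (1 + S\<^sup>2)"
    using \<open>A \<ge> 0\<close> \<open>B \<ge> 0\<close> by (intro mult_mono) auto
  moreover have "A\<^sup>2 - B\<^sup>2 = (A - B) * (A + B)"
    by (simp add: power2_eq_square algebra_simps)
  then have "\<bar>A\<^sup>2 - B\<^sup>2\<bar> = \<bar>A - B\<bar> * (A + B)"
    using \<open>A \<ge> 0\<close> \<open>B \<ge> 0\<close> by (simp add: abs_mult)
  ultimately show ?thesis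
    by (simp add: excess_sq_def A_def B_def S_def)
qed

lemma excess_sq_0_le:
  assumes "L \<ge> 0"
  shows "excess_sq t 0 \<le> 2 * excess_sq t L + 2 * L\<^sup>2"
proof (cases "sqrt t \<ge> L")
  case True
  then have "sqrt t \<ge> 0"
    using assms by linarith
  with True have "excess_sq t 0 = (sqrt t)\<^sup>2" "excess_sq t L = (sqrt t - L)\<^sup>2"
    by (simp_all add: excess_sq_def)
  moreover have "(sqrt t)\<^sup>2 \<le> 2 * (sqrt t - L)\<^sup>2 + 2 * L\<^sup>2"
    using sum_squares_ge_zero[of "sqrt t - 2 * L" 0] by (simp add: power2_eq_square algebra_simps)
  ultimately show ?thesis by simp
next
  case False
  then have "excess_sq t 0 \<le> L\<^sup>2"
    unfolding excess_sq_def using assms by (intro power_mono) auto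
  then show ?thesis
    using excess_sq_nonneg[of t L] zero_le_power2[of L] by linarith
qed

context
  fixes M :: "real measure"
  assumes finite_M: "finite_measure M" and sets_eq_borel: "sets M = sets borel"
begin

interpretation finite_measure M
  by (fact finite_M)

lemma borel_measurable_excess_sq_M: "(\<lambda>t. excess_sq t L) \<in> borel_measurable M"
  using borel_measurable_excess_sq measurable_cong_sets[OF sets_eq_borel refl] by blast

lemma integrable_excess_sq:
  assumes "integrable M (\<lambda>t. excess_sq t 0)" "L \<ge> 0"
  shows "integrable M (\<lambda>t. excess_sq t L)"
  by (rule Bochner_Integration.integrable_bound[OF assms(1) borel_measurable_excess_sq_M])
     (use excess_sq_antimono[OF assms(2)] excess_sq_nonneg in auto)

text \<open>The excesses at \<open>0\<close> and at \<open>L\<close> bound each other up to constants, which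
  are integrable for a finite measure; so the integral vanishes identically as soon
  as it does not exist at \<open>0\<close>.\<close>

lemma integral_excess_sq_eq_0:
  assumes "\<not> integrable M (\<lambda>t. excess_sq t 0)" "L \<ge> 0"
  shows "(LINT t|M. excess_sq t L) = 0"
proof (rule not_integrable_integral_eq, rule notI)
  assume "integrable M (\<lambda>t. excess_sq t L)"
  then have "integrable M (\<lambda>t. 2 * excess_sq t L + 2 * L\<^sup>2)" by simp
  then have "integrable M (\<lambda>t. excess_sq t 0)"
    by (rule Bochner_Integration.integrable_bound[OF _ borel_measurable_excess_sq_M])
       (use excess_sq_0_le[OF assms(2)] excess_sq_nonneg in auto)
  with assms(1) show False ..
qed

lemma convex_on_integral_excess_sq: "convex_on {0..} (\<lambda>L. LINT t|M. excess_sq t L)"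
proof (rule convex_onI)
  fix u x y :: real
  assume u: "0 < u" "u < 1" and xy: "x \<in> {0..}" "y \<in> {0..}"
  then have "(1 - u) * x + u * y \<ge> 0" by simp
  show "(LINT t|M. excess_sq t ((1 - u) *\<^sub>R x + u *\<^sub>R y))
      \<le> (1 - u) * (LINT t|M. excess_sq t x) + u * (LINT t|M. excess_sq t y)"
  proof (cases "integrable M (\<lambda>t. excess_sq t 0)")
    case True
    then have "(LINT t|M. excess_sq t ((1 - u) * x + u * y))
        \<le> (LINT t|M. (1 - u) * excess_sq t x + u * excess_sq t y)"
      using u xy convex_onD[OF convex_on_excess_sq, of u x y]
      by (intro integral_mono) (auto simp: integrable_excess_sq[OF True])
    also have "\<dots> = (1 - u) * (LINT t|M. excess_sq t x) + u * (LINT t|M. excess_sq t y)"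
      using xy by (simp add: integrable_excess_sq[OF True])
    finally show ?thesis by simp
  next
    case False
    with xy \<open>(1 - u) * x + u * y \<ge> 0\<close> show ?thesis
      by (simp add: integral_excess_sq_eq_0)
  qed
qed simp

lemma continuous_on_integral_excess_sq: "continuous_on {0..} (\<lambda>L. LINT t|M. excess_sq t L)"
proof (cases "integrable M (\<lambda>t. excess_sq t 0)")
  case True
  define K where "K = (LINT t|M. 1 + excess_sq t 0)"
  have "K-lipschitz_on {0..} (\<lambda>L. LINT t|M. excess_sq t L)"
  proof (rule lipschitz_onI)
    fix x y :: real
    assume xy: "x \<in> {0..}" "y \<in> {0..}"
    have "dist (LINT t|M. excess_sq t x) (LINT t|M. excess_sq t y)
        = \<bar>LINT t|M. excess_sq t x - excess_sq t y\<bar>"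
      using xy by (simp add: integrable_excess_sq[OF True] dist_real_def)
    also have "\<dots> \<le> (LINT t|M. \<bar>excess_sq t x - excess_sq t y\<bar>)"
      by (rule integral_abs_bound)
    also have "\<dots> \<le> (LINT t|M. \<bar>x - y\<bar> * (1 + excess_sq t 0))"
      using True xy excess_sq_lipschitz
      by (intro integral_mono) (auto simp: integrable_excess_sq[OF True])
    also have "\<dots> = K * dist x y"
      using True by (simp add: K_def dist_real_def)
    finally show "dist (LINT t|M. excess_sq t x) (LINT t|M. excess_sq t y) \<le> K * dist x y" .
  next
    show "K \<ge> 0"
      unfolding K_def by (intro integral_nonneg_AE AE_I2 add_nonneg_nonneg excess_sq_nonneg) simp
  qed
  then show ?thesis
    by (rule lipschitz_on_continuous_on)
next
  case False
  then show ?thesis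
    by (subst continuous_on_cong[OF refl, of _ _ "\<lambda>_. 0"])
       (auto simp: integral_excess_sq_eq_0)
qed

end

lemma finite_measure_W: "finite_measure (W i m n)"
proof -
  have "prob_space (gauss_mat m n)"
    unfolding gauss_mat_def by (auto intro!: prob_space_PiM prob_space_normal_density)
  \<comment> \<open>No measurability of the eigenvalue map is needed: \<open>distr\<close> never gives the
    whole space more mass than it has in \<open>gauss_mat m n\<close>.\<close>
  moreover have "emeasure (W i m n) (space (W i m n)) \<le> emeasure (gauss_mat m n) (space (gauss_mat m n))"
    unfolding W_def distr_def emeasure_measure_of_conv by (auto intro: emeasure_space)
  ultimately show ?thesis
    by (intro finite_measureI) (auto simp: prob_space.emeasure_space_1 top_unique)
qed

lemma sets_W: "sets (W i m n) = sets borel"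
  by (simp add: W_def)

lemma w_eq_integral_excess_sq:
  assumes "L \<ge> 0"
  shows "w i L m n = (LINT t|W i m n. excess_sq t L)"
  unfolding w_def set_lebesgue_integral_def indicator_scaleR_eq_excess_sq[OF assms] ..

lemma w_nonneg: "L \<ge> 0 \<Longrightarrow> w i L m n \<ge> 0"
  by (simp add: w_eq_integral_excess_sq excess_sq_nonneg)

lemma convex_on_w: "convex_on {0..} (\<lambda>L. w i L m n)"
  using convex_on_integral_excess_sq[OF finite_measure_W sets_W]
  by (rule convex_on_cong[THEN iffD1, OF refl, rotated]) (simp add: w_eq_integral_excess_sq)

lemma continuous_on_w: "continuous_on {0..} (\<lambda>L. w i L m n)"
  using continuous_on_integral_excess_sq[OF finite_measure_W sets_W]
  by (rule continuous_on_cong[THEN iffD1, OF refl, rotated]) (simp add: w_eq_integral_excess_sq)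

theorem lemma6:
  fixes r m n :: nat and \<alpha> :: real
  assumes "1 \<le> r" and "r \<le> m" and "m \<le> n" and "r < n"
    and "\<alpha> \<in> {1/2, 1}"
  shows "convex_on {0..} (\<lambda>\<Lambda>. MSE n \<Lambda> r m \<alpha>)
    \<and> (\<exists>!\<Lambda>0. \<Lambda>0 \<in> {0..} \<and> (\<forall>\<Lambda>\<in>{0..}. MSE n \<Lambda>0 r m \<alpha> \<le> MSE n \<Lambda> r m \<alpha>))"
proof -
  define a where "a = real r * real (n - r) / (real m * real n)"
  define b where "b = \<alpha> * real (n - r) / (real m * real n)"
  define c where "c = real r / real m + real r / real n - (real r)\<^sup>2 / (real m * real n)"
  define g where "g L = c + b * (\<Sum>i=1..m - r. w i L (m - r) (n - r))" for L
  have MSE_eq: "MSE n L r m \<alpha> = g L + a * L\<^sup>2" for L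
    by (simp add: MSE_def a_def b_def c_def g_def)
  have "a > 0" "b \<ge> 0"
    using assms by (auto simp: a_def b_def)
  have g_convex: "convex_on {0..} g"
    unfolding g_def using \<open>b \<ge> 0\<close>
    by (intro convex_on_add convex_on_cmul convex_on_finite_sum convex_on_w)
       (auto simp: convex_on_const convex_real_interval)
  have MSE_convex: "convex_on {0..} (\<lambda>L. MSE n L r m \<alpha>)"
    unfolding MSE_eq using \<open>a > 0\<close>
    by (intro convex_on_add g_convex convex_on_cmul convex_on_subset[OF convex_power2]) auto
  have MSE_continuous: "continuous_on {0..} (\<lambda>L. MSE n L r m \<alpha>)"
    unfolding MSE_eq g_def by (intro continuous_intros continuous_on_w)
  have MSE_lower: "c + a * L\<^sup>2 \<le> MSE n L r m \<alpha>" if "L \<ge> 0" for L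
    using that \<open>b \<ge> 0\<close> by (simp add: MSE_eq g_def w_nonneg sum_nonneg)
  obtain L0 where "L0 \<ge> 0" "\<forall>L\<ge>0. MSE n L0 r m \<alpha> \<le> MSE n L r m \<alpha>"
    using ex_minimizer_coercive[OF MSE_continuous \<open>a > 0\<close> MSE_lower] by blast
  then show ?thesis
    using MSE_convex minimizer_unique_convex_plus_square[OF g_convex \<open>a > 0\<close>]
    by (intro conjI ex1I[of _ L0]) (auto simp: MSE_eq)
qed

end
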